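(* Let $q \ge 2$ be a prime and $n \ge 1$. Let $S \subset \mathbb{F}_q^n \times \mathbb{F}_q^n$ be a set containing no three points of the form $$(x,y),\ (x,y+d),\ (x+d,y')$$ with $x,y,y' \in \mathbb{F}_q^n$ and $d \in \mathbb{F}_q^n \setminus \{0\}$. Then $$|S| \le 3\, q^{(2-c_q)n},$$ where $c_q$ is the positive constant depending only on $q$ defined by $$q^{1-c_q} = \inf_{0<x<1} x^{-(q-1)/3}\,(1+x+\dots+x^{q-1}).$$ *)

theory Defs
  imports "HOL-Analysis.Analysis"
begin

text \<open>The vector space F_q^n (q prime) is modelled concretely: a vector is a function
  nat => nat with entries in {0..<q} at coordinates i < n and value 0 elsewhere;
  addition is coordinatewise modulo q.\<close>

definition Fqn :: "nat \<Rightarrow> nat \<Rightarrow> (nat \<Rightarrow> nat) set" where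
  "Fqn q n = {v. (\<forall>i<n. v i < q) \<and> (\<forall>i\<ge>n. v i = 0)}"

definition vadd :: "nat \<Rightarrow> (nat \<Rightarrow> nat) \<Rightarrow> (nat \<Rightarrow> nat) \<Rightarrow> (nat \<Rightarrow> nat)" where
  "vadd q v w = (\<lambda>i. (v i + w i) mod q)"

definition c_const :: "nat \<Rightarrow> real" where
  "c_const q = 1 - log (real q)
     (INF x\<in>{0<..<1::real}. x powr (- (real q - 1) / 3) * (\<Sum>i<q. x ^ i))"

end

(*
  Fix x and let Y be the fibre of S over x, A = fst ` S.  By Fermat's little theorem the polynomial
  F(y1, y2, c) = prod_i (1 - (c_i - x_i - y2_i + y1_i)^(q-1)) is, modulo q, the indicator of
  c + y1 = x + y2.  As S contains no corner, for every weight v on A the matrix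
  (sum over c in A of v(c) F(y1, y2, c)) indexed by Y x Y is diagonal with entries v(x).

  F has total degree at most (q-1)n, so each of its monomials has degree at most (q-1)n/3 in y1, in y2
  or in c.  If v kills all moments of degree at most (q-1)n/3 on A, the monomials of low degree in c
  disappear and the remaining ones exhibit the diagonal matrix as a sum of at most 2M products, M being
  the number of low-degree exponents; hence |Y| <= 2M when v(x) is nonzero mod q.  Linear algebra
  mod q provides such a v for all but at most M points x, so |S| <= 2M q^n + M q^n.  Finally
  M <= (q^(1 - c_q))^n, by weighting each low-degree exponent a with t^(deg a - (q-1)n/3), 0 < t < 1.
*)
theory Submission
  imports Defs "HOL-Number_Theory.Number_Theory"
begin

section \<open>Linear algebra modulo a prime\<close>

lemma exists_nontrivial_solution_mod_prime:
  fixes p :: int and L :: "'j \<Rightarrow> 'k \<Rightarrow> int"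
  assumes "prime p" and "finite J" and "finite K" and "card J < card K"
  shows "\<exists>w. (\<exists>k\<in>K. \<not> p dvd w k) \<and> (\<forall>j\<in>J. p dvd (\<Sum>k\<in>K. L j k * w k))"
  using assms(2-4)
proof (induction J arbitrary: K L rule: finite_induct)
  case empty
  then obtain k where "k \<in> K"
    by fastforce
  moreover have "\<not> p dvd 1"
    using assms(1) by (meson not_prime_unit)
  ultimately show ?case
    by (intro exI[of _ "\<lambda>k'. if k' = k then 1 else 0"]) auto
next
  case (insert j J)
  show ?case
  proof (cases "\<forall>k\<in>K. p dvd L j k")
    case True
    from insert.IH[of K L] insert.prems insert.hyps obtain w where
      w: "\<exists>k\<in>K. \<not> p dvd w k" "\<forall>j\<in>J. p dvd (\<Sum>k\<in>K. L j k * w k)"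
      by auto
    moreover have "p dvd (\<Sum>k\<in>K. L j k * w k)"
      using True by (intro dvd_sum) auto
    ultimately show ?thesis
      by auto
  next
    case False
    then obtain k0 where k0: "k0 \<in> K" "\<not> p dvd L j k0"
      by auto
    define K' where "K' = K - {k0}"
    \<comment> \<open>Eliminate the unknown at k0 by means of equation j.\<close>
    define L' where "L' j' k = L j' k * L j k0 - L j' k0 * L j k" for j' k
    have "finite K'" "card J < card K'"
      using insert k0 by (auto simp: K'_def)
    from insert.IH[OF this, of L'] obtain w' where
      w': "\<exists>k\<in>K'. \<not> p dvd w' k" "\<forall>j\<in>J. p dvd (\<Sum>k\<in>K'. L' j k * w' k)"
      by blast
    define w where "w k = (if k = k0 then - (\<Sum>k\<in>K'. L j k * w' k) else L j k0 * w' k)" for k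
    have split: "(\<Sum>k\<in>K. f k) = f k0 + (\<Sum>k\<in>K'. f k)" for f :: "_ \<Rightarrow> int"
      using insert.prems(1) k0(1) by (simp add: K'_def sum.remove)
    have w_K': "w k = L j k0 * w' k" if "k \<in> K'" for k
      using that by (simp add: K'_def w_def)
    have "(\<Sum>k\<in>K. L j k * w k) = 0"
      unfolding split using w_K' by (simp add: w_def sum_distrib_left algebra_simps)
    moreover have "(\<Sum>k\<in>K. L j' k * w k) = (\<Sum>k\<in>K'. L' j' k * w' k)" for j'
      unfolding split using w_K'
      by (simp add: w_def L'_def sum_distrib_left sum_subtractf algebra_simps)
    moreover have "\<exists>k\<in>K. \<not> p dvd w k"
    proof -
      from w'(1) obtain k1 where k1: "k1 \<in> K'" "\<not> p dvd w' k1"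
        by blast
      then have "\<not> p dvd w k1"
        using w_K' k0(2) prime_dvd_mult_iff[OF assms(1)] by auto
      with k1 show ?thesis
        by (auto simp: K'_def)
    qed
    ultimately show ?thesis
      using w'(2) by auto
  qed
qed

lemma card_le_of_diagonal_factorization_mod_prime:
  fixes p d :: int and f g :: "'j \<Rightarrow> 'k \<Rightarrow> int"
  assumes p: "prime p" and "finite J" and "finite K" and d: "\<not> p dvd d"
    and factorization: "\<And>y1 y2. y1 \<in> K \<Longrightarrow> y2 \<in> K \<Longrightarrow>
       [(\<Sum>j\<in>J. f j y1 * g j y2) = (if y1 = y2 then d else 0)] (mod p)"
  shows "card K \<le> card J"
proof (rule ccontr)
  assume "\<not> card K \<le> card J"
  then obtain w where w: "\<exists>k\<in>K. \<not> p dvd w k" "\<forall>j\<in>J. p dvd (\<Sum>k\<in>K. f j k * w k)"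
    using exists_nontrivial_solution_mod_prime[OF p \<open>finite J\<close> \<open>finite K\<close>, of f] by auto
  from w(1) obtain k1 where k1: "k1 \<in> K" "\<not> p dvd w k1"
    by blast
  have swap: "(\<Sum>y\<in>K. w y * (\<Sum>j\<in>J. f j y * g j k1)) = (\<Sum>j\<in>J. g j k1 * (\<Sum>y\<in>K. f j y * w y))"
  proof -
    have "(\<Sum>y\<in>K. w y * (\<Sum>j\<in>J. f j y * g j k1)) = (\<Sum>y\<in>K. \<Sum>j\<in>J. g j k1 * (f j y * w y))"
      by (simp add: sum_distrib_left ac_simps)
    also have "\<dots> = (\<Sum>j\<in>J. g j k1 * (\<Sum>y\<in>K. f j y * w y))"
      by (subst sum.swap) (simp add: sum_distrib_left)
    finally show ?thesis .
  qed
  have "[(\<Sum>y\<in>K. w y * (\<Sum>j\<in>J. f j y * g j k1)) = (\<Sum>y\<in>K. w y * (if y = k1 then d else 0))] (mod p)"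
    using factorization k1(1) by (intro cong_sum cong_scalar_left) auto
  moreover have "(\<Sum>y\<in>K. w y * (if y = k1 then d else 0)) = w k1 * d"
    using \<open>finite K\<close> k1(1) by (simp add: if_distrib cong: if_cong)
  ultimately have "[(\<Sum>j\<in>J. g j k1 * (\<Sum>y\<in>K. f j y * w y)) = w k1 * d] (mod p)"
    by (simp only: swap)
  moreover have "p dvd (\<Sum>j\<in>J. g j k1 * (\<Sum>y\<in>K. f j y * w y))"
    using w(2) by (intro dvd_sum) (simp add: dvd_mult)
  ultimately have "p dvd w k1 * d"
    using cong_dvd_iff by blast
  with k1(2) d p show False
    by (simp add: prime_dvd_mult_iff)
qed

lemma card_forced_zero_coords_le:
  fixes p :: int and L :: "'j \<Rightarrow> 'k \<Rightarrow> int"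
  assumes p: "prime p" and "finite J" and "finite K"
  shows "card {k\<in>K. \<forall>w. (\<forall>j\<in>J. p dvd (\<Sum>k'\<in>K. L j k' * w k')) \<longrightarrow> p dvd w k} \<le> card J"
    (is "card ?Z \<le> _")
proof (rule ccontr)
  assume "\<not> card ?Z \<le> card J"
  moreover have "finite ?Z"
    using \<open>finite K\<close> by simp
  ultimately obtain w where w: "\<exists>k\<in>?Z. \<not> p dvd w k" "\<forall>j\<in>J. p dvd (\<Sum>k\<in>?Z. L j k * w k)"
    using exists_nontrivial_solution_mod_prime[OF p \<open>finite J\<close>, of ?Z L] by auto
  define w' where "w' k = (if k \<in> ?Z then w k else 0)" for k
  have "(\<Sum>k\<in>K. L j k * w' k) = (\<Sum>k\<in>?Z. L j k * w k)" for j
    using \<open>finite K\<close> by (intro sum.mono_neutral_cong_right) (auto simp: w'_def)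
  with w(2) have "\<forall>j\<in>J. p dvd (\<Sum>k\<in>K. L j k * w' k)"
    by simp
  moreover obtain k where "k \<in> ?Z" and "\<not> p dvd w k"
    using w(1) by blast
  ultimately have "p dvd w' k"
    by blast
  with \<open>k \<in> ?Z\<close> \<open>\<not> p dvd w k\<close> show False
    by (simp add: w'_def)
qed

lemma sum_products_factor_through_Plus:
  fixes c :: "'t \<Rightarrow> 'a::comm_semiring_1" and \<phi> \<psi> :: "'e \<Rightarrow> 'y \<Rightarrow> 'a"
  assumes "finite P" and "finite E" and low: "\<And>\<tau>. \<tau> \<in> P \<Longrightarrow> \<alpha> \<tau> \<in> E \<or> \<beta> \<tau> \<in> E"
  shows "\<exists>f g. \<forall>y1 y2.
    (\<Sum>\<tau>\<in>P. c \<tau> * \<phi> (\<alpha> \<tau>) y1 * \<psi> (\<beta> \<tau>) y2) = (\<Sum>j\<in>E <+> E. f j y1 * g j y2)"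
proof -
  define P1 where "P1 = {\<tau>\<in>P. \<alpha> \<tau> \<in> E}"
  define P2 where "P2 = P - P1"
  define f where "f = case_sum \<phi> (\<lambda>b y1. \<Sum>\<tau>\<in>{\<tau>\<in>P2. \<beta> \<tau> = b}. c \<tau> * \<phi> (\<alpha> \<tau>) y1)"
  define g where "g = case_sum (\<lambda>a y2. \<Sum>\<tau>\<in>{\<tau>\<in>P1. \<alpha> \<tau> = a}. c \<tau> * \<psi> (\<beta> \<tau>) y2) \<psi>"
  have fin: "finite P1" "finite P2"
    using \<open>finite P\<close> by (simp_all add: P1_def P2_def)
  have "(\<Sum>\<tau>\<in>P. c \<tau> * \<phi> (\<alpha> \<tau>) y1 * \<psi> (\<beta> \<tau>) y2) = (\<Sum>j\<in>E <+> E. f j y1 * g j y2)" for y1 y2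
  proof -
    have "(\<Sum>\<tau>\<in>P1. c \<tau> * \<phi> (\<alpha> \<tau>) y1 * \<psi> (\<beta> \<tau>) y2) =
        (\<Sum>a\<in>E. \<Sum>\<tau>\<in>{\<tau>\<in>P1. \<alpha> \<tau> = a}. c \<tau> * \<phi> (\<alpha> \<tau>) y1 * \<psi> (\<beta> \<tau>) y2)"
      using fin \<open>finite E\<close> by (intro sum.group[symmetric]) (auto simp: P1_def)
    also have "\<dots> = (\<Sum>a\<in>E. f (Inl a) y1 * g (Inl a) y2)"
      by (auto simp: f_def g_def sum_distrib_left ac_simps intro!: sum.cong)
    finally have P1_sum: "(\<Sum>\<tau>\<in>P1. c \<tau> * \<phi> (\<alpha> \<tau>) y1 * \<psi> (\<beta> \<tau>) y2) =
        (\<Sum>a\<in>E. f (Inl a) y1 * g (Inl a) y2)" .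
    have "(\<Sum>\<tau>\<in>P2. c \<tau> * \<phi> (\<alpha> \<tau>) y1 * \<psi> (\<beta> \<tau>) y2) =
        (\<Sum>b\<in>E. \<Sum>\<tau>\<in>{\<tau>\<in>P2. \<beta> \<tau> = b}. c \<tau> * \<phi> (\<alpha> \<tau>) y1 * \<psi> (\<beta> \<tau>) y2)"
      using fin \<open>finite E\<close> low by (intro sum.group[symmetric]) (auto simp: P1_def P2_def)
    also have "\<dots> = (\<Sum>b\<in>E. f (Inr b) y1 * g (Inr b) y2)"
      by (auto simp: f_def g_def sum_distrib_right intro!: sum.cong)
    finally have P2_sum: "(\<Sum>\<tau>\<in>P2. c \<tau> * \<phi> (\<alpha> \<tau>) y1 * \<psi> (\<beta> \<tau>) y2) =
        (\<Sum>b\<in>E. f (Inr b) y1 * g (Inr b) y2)" .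
    have "(\<Sum>\<tau>\<in>P. c \<tau> * \<phi> (\<alpha> \<tau>) y1 * \<psi> (\<beta> \<tau>) y2) =
        (\<Sum>\<tau>\<in>P2. c \<tau> * \<phi> (\<alpha> \<tau>) y1 * \<psi> (\<beta> \<tau>) y2) + (\<Sum>\<tau>\<in>P1. c \<tau> * \<phi> (\<alpha> \<tau>) y1 * \<psi> (\<beta> \<tau>) y2)"
      unfolding P2_def using \<open>finite P\<close> by (intro sum.subset_diff) (auto simp: P1_def)
    then show ?thesis
      using \<open>finite E\<close> by (simp add: P1_sum P2_sum sum.Plus comp_def add.commute)
  qed
  then show ?thesis
    by blast
qed

definition zero_ext :: "nat \<Rightarrow> (nat \<Rightarrow> 'a::zero) \<Rightarrow> nat \<Rightarrow> 'a" where
  "zero_ext n f = (\<lambda>i. if i < n then f i else 0)"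

lemma bij_betw_zero_ext_Fqn: "bij_betw (zero_ext n) (\<Pi>\<^sub>E i\<in>{..<n}. {..<q}) (Fqn q n)"
  by (rule bij_betw_byWitness[where f' = "\<lambda>v. restrict v {..<n}"])
    (auto simp: zero_ext_def Fqn_def PiE_def extensional_def)

lemma finite_Fqn: "finite (Fqn q n)"
  using bij_betw_finite[OF bij_betw_zero_ext_Fqn] by (simp add: finite_PiE)

lemma card_Fqn: "card (Fqn q n) = q ^ n"
  using bij_betw_same_card[OF bij_betw_zero_ext_Fqn] by (simp add: card_PiE)

lemma sum_prod_Fqn:
  fixes g :: "nat \<Rightarrow> nat \<Rightarrow> 'a::comm_semiring_1"
  shows "(\<Sum>a\<in>Fqn q n. \<Prod>i<n. g i (a i)) = (\<Prod>i<n. \<Sum>j<q. g i j)"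
proof -
  have "(\<Sum>a\<in>Fqn q n. \<Prod>i<n. g i (a i)) = (\<Sum>f\<in>(\<Pi>\<^sub>E i\<in>{..<n}. {..<q}). \<Prod>i<n. g i (zero_ext n f i))"
    by (rule sum.reindex_bij_betw[OF bij_betw_zero_ext_Fqn, symmetric])
  also have "\<dots> = (\<Sum>f\<in>(\<Pi>\<^sub>E i\<in>{..<n}. {..<q}). \<Prod>i<n. g i (f i))"
    by (simp add: zero_ext_def)
  also have "\<dots> = (\<Prod>i<n. \<Sum>j<q. g i j)"
    by (rule prod_sum_PiE[symmetric]) auto
  finally show ?thesis .
qed

lemma Fqn_eqI_cong:
  assumes "v \<in> Fqn q n" and "w \<in> Fqn q n"
    and "\<And>i. i < n \<Longrightarrow> [int (v i) = int (w i)] (mod int q)"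
  shows "v = w"
proof
  fix i
  show "v i = w i"
  proof (cases "i < n")
    case True
    with assms(3) have "[v i = w i] (mod q)"
      by (simp add: cong_int_iff)
    moreover have "v i < q" and "w i < q"
      using assms(1,2) True by (simp_all add: Fqn_def)
    ultimately show ?thesis
      by (rule cong_less_modulus_unique_nat)
  next
    case False
    with assms(1,2) show ?thesis
      by (simp add: Fqn_def)
  qed
qed

lemma Fqn_lt: "0 < q \<Longrightarrow> v \<in> Fqn q n \<Longrightarrow> v i < q"
  by (cases "i < n") (auto simp: Fqn_def)

lemma vadd_in_Fqn: "0 < q \<Longrightarrow> v \<in> Fqn q n \<Longrightarrow> w \<in> Fqn q n \<Longrightarrow> vadd q v w \<in> Fqn q n"
  by (simp add: Fqn_def vadd_def)

lemma cong_vadd: "[int (vadd q v w i) = int (v i) + int (w i)] (mod int q)"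
  by (simp add: vadd_def cong_def of_nat_mod mod_simps)

lemma vadd_zero: "0 < q \<Longrightarrow> v \<in> Fqn q n \<Longrightarrow> vadd q v (\<lambda>_. 0) = v"
  by (rule ext) (simp add: vadd_def Fqn_lt)

lemma exists_vadd_eq:
  assumes "0 < q" and v: "v \<in> Fqn q n" and w: "w \<in> Fqn q n"
  shows "\<exists>d\<in>Fqn q n. vadd q v d = w"
proof -
  define d where "d i = (w i + (q - v i)) mod q" for i
  have d: "d \<in> Fqn q n"
    using assms by (auto simp: d_def Fqn_def)
  have "vadd q v d = w"
  proof (rule Fqn_eqI_cong[OF vadd_in_Fqn[OF \<open>0 < q\<close> v d] w])
    fix i
    have "int (d i) = (int (w i) + int q - int (v i)) mod int q"
      using Fqn_lt[OF \<open>0 < q\<close> v, of i] by (simp add: d_def of_nat_mod of_nat_diff)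
    then have "(int (v i) + int (d i)) mod int q = (int (w i) + int q) mod int q"
      by (simp add: mod_simps algebra_simps)
    then show "[int (vadd q v d i) = int (w i)] (mod int q)"
      using cong_vadd[of q v d i] by (simp add: cong_def)
  qed
  with d show ?thesis
    by blast
qed

lemma corner_eq_iff:
  assumes "0 < q" and x: "x \<in> Fqn q n" and c: "c \<in> Fqn q n" and d: "d \<in> Fqn q n"
    and y2: "vadd q y1 d = y2"
  shows "(\<forall>i<n. [int (c i) + int (y1 i) = int (x i) + int (y2 i)] (mod int q)) \<longleftrightarrow> c = vadd q x d"
proof -
  have c0: "[int (vadd q x d i) + int (y1 i) = int (x i) + int (y2 i)] (mod int q)" for i
  proof -
    have "[int (vadd q x d i) + int (y1 i) = int (x i) + (int (y1 i) + int (d i))] (mod int q)"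
      using cong_add[OF cong_vadd[of q x d i] cong_refl[of "int (y1 i)"]] by (simp add: ac_simps)
    moreover have "[int (x i) + (int (y1 i) + int (d i)) = int (x i) + int (y2 i)] (mod int q)"
      using cong_sym[OF cong_vadd[of q y1 d i]] y2 by (simp add: cong_add_lcancel)
    ultimately show ?thesis
      by (rule cong_trans)
  qed
  show ?thesis
  proof
    assume H: "\<forall>i<n. [int (c i) + int (y1 i) = int (x i) + int (y2 i)] (mod int q)"
    show "c = vadd q x d"
    proof (rule Fqn_eqI_cong[OF c vadd_in_Fqn[OF \<open>0 < q\<close> x d]])
      fix i
      assume "i < n"
      with H c0 have "[int (c i) + int (y1 i) = int (vadd q x d i) + int (y1 i)] (mod int q)"
        by (meson cong_sym cong_trans)
      then show "[int (c i) = int (vadd q x d i)] (mod int q)"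
        by (simp add: cong_add_rcancel)
    qed
  next
    assume "c = vadd q x d"
    with c0 show "\<forall>i<n. [int (c i) + int (y1 i) = int (x i) + int (y2 i)] (mod int q)"
      by simp
  qed
qed

section \<open>The corner polynomial\<close>

definition mdeg :: "nat \<Rightarrow> (nat \<Rightarrow> nat) \<Rightarrow> nat" where
  "mdeg n a = (\<Sum>i<n. a i)"

definition multipow :: "nat \<Rightarrow> (nat \<Rightarrow> nat) \<Rightarrow> (nat \<Rightarrow> nat) \<Rightarrow> int" where
  "multipow n y a = (\<Prod>i<n. int (y i) ^ a i)"

lemma multipow_zero_ext [simp]: "multipow n y (zero_ext n f) = (\<Prod>i<n. int (y i) ^ f i)"
  by (simp add: multipow_def zero_ext_def)

lemma mdeg_zero_ext [simp]: "mdeg n (zero_ext n f) = (\<Sum>i<n. f i)"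
  by (simp add: mdeg_def zero_ext_def)

definition corner_poly ::
  "nat \<Rightarrow> nat \<Rightarrow> (nat \<Rightarrow> nat) \<Rightarrow> (nat \<Rightarrow> nat) \<Rightarrow> (nat \<Rightarrow> nat) \<Rightarrow> (nat \<Rightarrow> nat) \<Rightarrow> int" where
  "corner_poly q n x y1 y2 c = (\<Prod>i<n. 1 - (int (c i) - int (x i) - int (y2 i) + int (y1 i)) ^ (q - 1))"

lemma one_minus_pow_cong_indicator:
  fixes z :: int
  assumes p: "prime p"
  shows "[1 - z ^ (p - 1) = (if int p dvd z then 1 else 0)] (mod int p)"
proof (cases "int p dvd z")
  case True
  moreover have "0 < p - 1"
    using prime_ge_2_nat[OF p] by simp
  ultimately have "[z ^ (p - 1) = 0] (mod int p)"
    by (meson cong_0_iff dvd_power dvd_trans)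
  from cong_diff[OF cong_refl[of 1] this] True show ?thesis
    by simp
next
  case False
  define a where "a = nat (z mod int p)"
  have "0 < p"
    using p prime_gt_0_nat by blast
  then have a: "int a = z mod int p"
    by (simp add: a_def)
  then have "[z = int a] (mod int p)"
    by (simp add: cong_def)
  moreover have "\<not> int p dvd int a"
    using False by (simp add: a dvd_mod_iff)
  then have "\<not> p dvd a"
    by simp
  then have "[int a ^ (p - 1) = 1] (mod int p)"
    using fermat_theorem[OF p] by (metis cong_int_iff of_nat_1 of_nat_power)
  ultimately have "[z ^ (p - 1) = 1] (mod int p)"
    using cong_pow cong_trans by blast
  from cong_diff[OF cong_refl[of 1] this] False show ?thesis
    by simp
qed

lemma corner_poly_cong_indicator:
  assumes "prime q"
  shows "[corner_poly q n x y1 y2 c =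
    (if \<forall>i<n. [int (c i) + int (y1 i) = int (x i) + int (y2 i)] (mod int q) then 1 else 0)] (mod int q)"
proof -
  have "[corner_poly q n x y1 y2 c =
    (\<Prod>i<n. if [int (c i) + int (y1 i) = int (x i) + int (y2 i)] (mod int q) then 1 else 0)] (mod int q)"
    unfolding corner_poly_def
  proof (rule cong_prod)
    fix i
    have iff: "[int (c i) + int (y1 i) = int (x i) + int (y2 i)] (mod int q) \<longleftrightarrow>
        int q dvd (int (c i) - int (x i) - int (y2 i) + int (y1 i))"
      by (simp add: cong_iff_dvd_diff algebra_simps)
    show "[1 - (int (c i) - int (x i) - int (y2 i) + int (y1 i)) ^ (q - 1) =
        (if [int (c i) + int (y1 i) = int (x i) + int (y2 i)] (mod int q) then 1 else 0)] (mod int q)"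
      unfolding iff by (rule one_minus_pow_cong_indicator[OF assms])
  qed
  also have "(\<Prod>i<n. if [int (c i) + int (y1 i) = int (x i) + int (y2 i)] (mod int q) then 1 else 0) =
    (if \<forall>i<n. [int (c i) + int (y1 i) = int (x i) + int (y2 i)] (mod int q) then 1 else (0::int))"
    by (induction n) (auto simp: less_Suc_eq)
  finally show ?thesis .
qed

lemma sum_corner_poly_cong:
  fixes v :: "(nat \<Rightarrow> nat) \<Rightarrow> int"
  assumes q: "prime q" and "finite A" and A: "A \<subseteq> Fqn q n"
    and x: "x \<in> Fqn q n" and d: "d \<in> Fqn q n" and y2: "vadd q y1 d = y2"
  shows "[(\<Sum>c\<in>A. v c * corner_poly q n x y1 y2 c) =
    (if vadd q x d \<in> A then v (vadd q x d) else 0)] (mod int q)"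
proof -
  have "0 < q"
    using q prime_gt_0_nat by blast
  have "[(\<Sum>c\<in>A. v c * corner_poly q n x y1 y2 c) = (\<Sum>c\<in>A. v c * of_bool (c = vadd q x d))] (mod int q)"
  proof (intro cong_sum cong_scalar_left)
    fix c
    assume "c \<in> A"
    with A have "(\<forall>i<n. [int (c i) + int (y1 i) = int (x i) + int (y2 i)] (mod int q)) \<longleftrightarrow> c = vadd q x d"
      using corner_eq_iff[OF \<open>0 < q\<close> x _ d y2] by blast
    then show "[corner_poly q n x y1 y2 c = of_bool (c = vadd q x d)] (mod int q)"
      using corner_poly_cong_indicator[OF q, of n x y1 y2 c] unfolding of_bool_def by simp_all
  qed
  also have "(\<Sum>c\<in>A. v c * of_bool (c = vadd q x d)) = (if vadd q x d \<in> A then v (vadd q x d) else 0)"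
    using \<open>finite A\<close> by (simp add: of_bool_def if_distrib cong: if_cong)
  finally show ?thesis .
qed

definition tri_exps :: "nat \<Rightarrow> (nat \<times> nat \<times> nat) set" where
  "tri_exps N = (SIGMA j:{..N}. SIGMA k:{..N - j}. {..N - j - k})"

lemma trinomial_expansion:
  fixes X :: "'a::comm_ring_1"
  shows "\<exists>\<kappa>. \<forall>u v w. (w - X - v + u) ^ N = (\<Sum>(j, k, l)\<in>tri_exps N. \<kappa> (j, k, l) * u ^ j * v ^ l * w ^ k)"
proof -
  define \<kappa> where "\<kappa> = (\<lambda>(j, k, l). of_nat (N choose j) * of_nat ((N - j) choose k)
    * of_nat ((N - j - k) choose l) * (- 1) ^ l * (- X) ^ (N - j - k - l) :: 'a)"
  have "(w - X - v + u) ^ N = (\<Sum>(j, k, l)\<in>tri_exps N. \<kappa> (j, k, l) * u ^ j * v ^ l * w ^ k)" for u v w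
  proof -
    have "(w - X - v + u) ^ N = (\<Sum>j\<le>N. of_nat (N choose j) * u ^ j * (w + (- v + - X)) ^ (N - j))"
      using binomial_ring[of u "w + (- v + - X)" N] by (simp add: algebra_simps)
    also have "\<dots> = (\<Sum>j\<le>N. \<Sum>k\<le>N - j. \<Sum>l\<le>N - j - k. \<kappa> (j, k, l) * u ^ j * v ^ l * w ^ k)"
    proof (rule sum.cong[OF refl])
      fix j
      have "(w + (- v + - X)) ^ (N - j) = (\<Sum>k\<le>N - j. of_nat ((N - j) choose k) * w ^ k *
           (\<Sum>l\<le>N - j - k. of_nat ((N - j - k) choose l) * (- v) ^ l * (- X) ^ (N - j - k - l)))"
        by (simp only: binomial_ring)
      then show "of_nat (N choose j) * u ^ j * (w + (- v + - X)) ^ (N - j) =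
          (\<Sum>k\<le>N - j. \<Sum>l\<le>N - j - k. \<kappa> (j, k, l) * u ^ j * v ^ l * w ^ k)"
        by (simp add: sum_distrib_left \<kappa>_def power_minus[of v] algebra_simps)
    qed
    also have "\<dots> = (\<Sum>(j, k, l)\<in>tri_exps N. \<kappa> (j, k, l) * u ^ j * v ^ l * w ^ k)"
      by (simp add: tri_exps_def sum.Sigma)
    finally show ?thesis .
  qed
  then show ?thesis
    by blast
qed

lemma one_minus_trinomial_expansion:
  fixes X :: "'a::comm_ring_1"
  shows "\<exists>\<kappa>. \<forall>u v w. 1 - (w - X - v + u) ^ N = (\<Sum>(j, k, l)\<in>tri_exps N. \<kappa> (j, k, l) * u ^ j * v ^ l * w ^ k)"
proof -
  obtain \<kappa> where \<kappa>: "\<And>u v w. (w - X - v + u) ^ N = (\<Sum>(j, k, l)\<in>tri_exps N. \<kappa> (j, k, l) * u ^ j * v ^ l * w ^ k)"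
    using trinomial_expansion by blast
  have "(\<Sum>(j, k, l)\<in>tri_exps N. of_bool ((j, k, l) = (0, 0, 0)) * u ^ j * v ^ l * w ^ k) = (1::'a)" for u v w
  proof -
    have "(\<Sum>(j, k, l)\<in>tri_exps N. of_bool ((j, k, l) = (0, 0, 0)) * u ^ j * v ^ l * w ^ k) =
        (\<Sum>t\<in>tri_exps N. if t = (0, 0, 0) then 1 else (0::'a))"
      by (rule sum.cong) (auto simp: of_bool_def split: if_splits)
    also have "\<dots> = 1"
      by (simp add: tri_exps_def)
    finally show ?thesis .
  qed
  then have "\<forall>u v w. 1 - (w - X - v + u) ^ N =
      (\<Sum>(j, k, l)\<in>tri_exps N. (of_bool ((j, k, l) = (0, 0, 0)) - \<kappa> (j, k, l)) * u ^ j * v ^ l * w ^ k)"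
    unfolding \<kappa> by (simp add: split_beta algebra_simps sum_subtractf)
  then show ?thesis
    by (intro exI[of _ "\<lambda>t. of_bool (t = (0, 0, 0)) - \<kappa> t"]) simp
qed

definition corner_exps :: "nat \<Rightarrow> nat \<Rightarrow> (nat \<Rightarrow> nat \<times> nat \<times> nat) set" where
  "corner_exps q n = (\<Pi>\<^sub>E i\<in>{..<n}. tri_exps (q - 1))"

definition exp_y1 :: "nat \<Rightarrow> (nat \<Rightarrow> nat \<times> nat \<times> nat) \<Rightarrow> nat \<Rightarrow> nat" where
  "exp_y1 n \<tau> = zero_ext n (\<lambda>i. fst (\<tau> i))"

definition exp_c :: "nat \<Rightarrow> (nat \<Rightarrow> nat \<times> nat \<times> nat) \<Rightarrow> nat \<Rightarrow> nat" where
  "exp_c n \<tau> = zero_ext n (\<lambda>i. fst (snd (\<tau> i)))"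

definition exp_y2 :: "nat \<Rightarrow> (nat \<Rightarrow> nat \<times> nat \<times> nat) \<Rightarrow> nat \<Rightarrow> nat" where
  "exp_y2 n \<tau> = zero_ext n (\<lambda>i. snd (snd (\<tau> i)))"

lemma finite_corner_exps: "finite (corner_exps q n)"
  by (simp add: corner_exps_def tri_exps_def finite_PiE)

lemma corner_poly_expansion:
  "\<exists>K. \<forall>y1 y2 c. corner_poly q n x y1 y2 c = (\<Sum>\<tau>\<in>corner_exps q n.
     K \<tau> * multipow n y1 (exp_y1 n \<tau>) * multipow n y2 (exp_y2 n \<tau>) * multipow n c (exp_c n \<tau>))"
proof -
  have "\<forall>i. \<exists>\<kappa>. \<forall>u v w. 1 - (w - int (x i) - v + u) ^ (q - 1) =
      (\<Sum>(j, k, l)\<in>tri_exps (q - 1). \<kappa> (j, k, l) * u ^ j * v ^ l * w ^ k)"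
    using one_minus_trinomial_expansion by blast
  from choice[OF this] obtain \<kappa> where \<kappa>: "\<forall>i u v w. 1 - (w - int (x i) - v + u) ^ (q - 1) =
      (\<Sum>(j, k, l)\<in>tri_exps (q - 1). \<kappa> i (j, k, l) * u ^ j * v ^ l * w ^ k)"
    by blast
  define K where "K \<tau> = (\<Prod>i<n. \<kappa> i (\<tau> i))" for \<tau>
  have "corner_poly q n x y1 y2 c = (\<Sum>\<tau>\<in>corner_exps q n.
     K \<tau> * multipow n y1 (exp_y1 n \<tau>) * multipow n y2 (exp_y2 n \<tau>) * multipow n c (exp_c n \<tau>))"
    for y1 y2 c
  proof -
    have "corner_poly q n x y1 y2 c = (\<Prod>i<n. \<Sum>(j, k, l)\<in>tri_exps (q - 1).
        \<kappa> i (j, k, l) * int (y1 i) ^ j * int (y2 i) ^ l * int (c i) ^ k)"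
      unfolding corner_poly_def \<kappa>[rule_format] ..
    also have "\<dots> = (\<Sum>\<tau>\<in>corner_exps q n. \<Prod>i<n. case \<tau> i of (j, k, l) \<Rightarrow>
        \<kappa> i (j, k, l) * int (y1 i) ^ j * int (y2 i) ^ l * int (c i) ^ k)"
      unfolding corner_exps_def by (rule prod_sum_PiE) (simp_all add: tri_exps_def)
    also have "\<dots> = (\<Sum>\<tau>\<in>corner_exps q n.
        K \<tau> * multipow n y1 (exp_y1 n \<tau>) * multipow n y2 (exp_y2 n \<tau>) * multipow n c (exp_c n \<tau>))"
      by (simp add: K_def exp_y1_def exp_y2_def exp_c_def split_beta prod.distrib)
    finally show ?thesis .
  qed
  then show ?thesis
    by blast
qed

lemma weighted_corner_poly_expansion:
  fixes v :: "(nat \<Rightarrow> nat) \<Rightarrow> int"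
  shows "\<exists>K. \<forall>y1 y2. (\<Sum>c\<in>A. v c * corner_poly q n x y1 y2 c) = (\<Sum>\<tau>\<in>corner_exps q n.
     K \<tau> * (\<Sum>c\<in>A. multipow n c (exp_c n \<tau>) * v c) * multipow n y1 (exp_y1 n \<tau>) * multipow n y2 (exp_y2 n \<tau>))"
proof -
  obtain K where K: "\<And>y1 y2 c. corner_poly q n x y1 y2 c = (\<Sum>\<tau>\<in>corner_exps q n.
     K \<tau> * multipow n y1 (exp_y1 n \<tau>) * multipow n y2 (exp_y2 n \<tau>) * multipow n c (exp_c n \<tau>))"
    using corner_poly_expansion by blast
  have "(\<Sum>c\<in>A. v c * corner_poly q n x y1 y2 c) = (\<Sum>\<tau>\<in>corner_exps q n.
     K \<tau> * (\<Sum>c\<in>A. multipow n c (exp_c n \<tau>) * v c) * multipow n y1 (exp_y1 n \<tau>) * multipow n y2 (exp_y2 n \<tau>))"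
    for y1 y2
  proof -
    have "(\<Sum>c\<in>A. v c * corner_poly q n x y1 y2 c) = (\<Sum>c\<in>A. \<Sum>\<tau>\<in>corner_exps q n. v c *
        (K \<tau> * multipow n y1 (exp_y1 n \<tau>) * multipow n y2 (exp_y2 n \<tau>) * multipow n c (exp_c n \<tau>)))"
      by (simp add: K sum_distrib_left)
    also have "\<dots> = (\<Sum>\<tau>\<in>corner_exps q n. \<Sum>c\<in>A. v c *
        (K \<tau> * multipow n y1 (exp_y1 n \<tau>) * multipow n y2 (exp_y2 n \<tau>) * multipow n c (exp_c n \<tau>)))"
      by (rule sum.swap)
    also have "\<dots> = (\<Sum>\<tau>\<in>corner_exps q n. K \<tau> * (\<Sum>c\<in>A. multipow n c (exp_c n \<tau>) * v c) *
        multipow n y1 (exp_y1 n \<tau>) * multipow n y2 (exp_y2 n \<tau>))"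
      by (intro sum.cong refl) (simp add: sum_distrib_left sum_distrib_right ac_simps)
    finally show ?thesis .
  qed
  then show ?thesis
    by blast
qed

definition low_exps :: "nat \<Rightarrow> nat \<Rightarrow> (nat \<Rightarrow> nat) set" where
  "low_exps q n = {a \<in> Fqn q n. 3 * mdeg n a \<le> (q - 1) * n}"

lemma finite_low_exps: "finite (low_exps q n)"
  by (simp add: low_exps_def finite_Fqn)

lemma corner_exps_has_low:
  assumes "\<tau> \<in> corner_exps q n" and "0 < q"
  shows "exp_y1 n \<tau> \<in> low_exps q n \<or> exp_y2 n \<tau> \<in> low_exps q n \<or> exp_c n \<tau> \<in> low_exps q n"
proof -
  have bound: "fst (\<tau> i) + fst (snd (\<tau> i)) + snd (snd (\<tau> i)) \<le> q - 1" if "i < n" for i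
    using PiE_mem[OF assms(1)[unfolded corner_exps_def], of i] that
    by (auto simp: tri_exps_def split_beta)
  then have "exp_y1 n \<tau> \<in> Fqn q n" "exp_y2 n \<tau> \<in> Fqn q n" "exp_c n \<tau> \<in> Fqn q n"
    using assms(2) by (fastforce simp: Fqn_def exp_y1_def exp_y2_def exp_c_def zero_ext_def)+
  moreover have "mdeg n (exp_y1 n \<tau>) + mdeg n (exp_y2 n \<tau>) + mdeg n (exp_c n \<tau>) \<le> (q - 1) * n"
  proof -
    have "mdeg n (exp_y1 n \<tau>) + mdeg n (exp_y2 n \<tau>) + mdeg n (exp_c n \<tau>) =
        (\<Sum>i<n. fst (\<tau> i) + fst (snd (\<tau> i)) + snd (snd (\<tau> i)))"
      by (simp add: exp_y1_def exp_y2_def exp_c_def sum.distrib)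
    also have "\<dots> \<le> (\<Sum>i<n. q - 1)"
      using bound by (intro sum_mono) auto
    finally show ?thesis
      by (simp add: mult.commute)
  qed
  ultimately show ?thesis
    by (auto simp: low_exps_def)
qed

lemma card_le_of_corner_poly_diagonal:
  fixes v :: "(nat \<Rightarrow> nat) \<Rightarrow> int"
  assumes q: "prime q" and "finite Y"
    and moments: "\<And>e. e \<in> low_exps q n \<Longrightarrow> int q dvd (\<Sum>c\<in>A. multipow n c e * v c)"
    and d: "\<not> int q dvd d"
    and diagonal: "\<And>y1 y2. y1 \<in> Y \<Longrightarrow> y2 \<in> Y \<Longrightarrow>
       [(\<Sum>c\<in>A. v c * corner_poly q n x y1 y2 c) = (if y1 = y2 then d else 0)] (mod int q)"
  shows "card Y \<le> 2 * card (low_exps q n)"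
proof -
  define E where "E = low_exps q n"
  define m where "m e = (\<Sum>c\<in>A. multipow n c e * v c)" for e
  obtain K where K: "\<And>y1 y2. (\<Sum>c\<in>A. v c * corner_poly q n x y1 y2 c) = (\<Sum>\<tau>\<in>corner_exps q n.
     K \<tau> * m (exp_c n \<tau>) * multipow n y1 (exp_y1 n \<tau>) * multipow n y2 (exp_y2 n \<tau>))"
    using weighted_corner_poly_expansion[where A = A and v = v and x = x] unfolding m_def by blast
  define h where "h \<tau> y1 y2 =
    K \<tau> * m (exp_c n \<tau>) * multipow n y1 (exp_y1 n \<tau>) * multipow n y2 (exp_y2 n \<tau>)" for \<tau> y1 y2
  define P where "P = {\<tau>\<in>corner_exps q n. exp_c n \<tau> \<notin> E}"
  have expand: "(\<Sum>c\<in>A. v c * corner_poly q n x y1 y2 c) = (\<Sum>\<tau>\<in>corner_exps q n. h \<tau> y1 y2)" for y1 y2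
    by (simp add: K h_def)
  have drop_low_c: "[(\<Sum>\<tau>\<in>corner_exps q n. h \<tau> y1 y2) = (\<Sum>\<tau>\<in>P. h \<tau> y1 y2)] (mod int q)" for y1 y2
  proof -
    have "(\<Sum>\<tau>\<in>corner_exps q n. h \<tau> y1 y2) =
        (\<Sum>\<tau>\<in>corner_exps q n - P. h \<tau> y1 y2) + (\<Sum>\<tau>\<in>P. h \<tau> y1 y2)"
      using finite_corner_exps by (intro sum.subset_diff) (auto simp: P_def)
    moreover have "int q dvd (\<Sum>\<tau>\<in>corner_exps q n - P. h \<tau> y1 y2)"
      using moments by (intro dvd_sum) (simp add: h_def m_def P_def E_def dvd_mult dvd_mult2)
    ultimately show ?thesis
      by (simp add: cong_iff_dvd_diff)
  qed
  have "exp_y1 n \<tau> \<in> E \<or> exp_y2 n \<tau> \<in> E" if "\<tau> \<in> P" for \<tau>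
    using that corner_exps_has_low[of \<tau> q n] prime_gt_0_nat[OF q] by (auto simp: P_def E_def)
  then obtain f g where factor: "\<And>y1 y2. (\<Sum>\<tau>\<in>P. h \<tau> y1 y2) = (\<Sum>j\<in>E <+> E. f j y1 * g j y2)"
    using sum_products_factor_through_Plus[of P E "exp_y1 n" "exp_y2 n" "\<lambda>\<tau>. K \<tau> * m (exp_c n \<tau>)"
        "\<lambda>a y. multipow n y a" "\<lambda>b y. multipow n y b"]
    by (auto simp: h_def P_def E_def finite_corner_exps finite_low_exps)
  have "card Y \<le> card (E <+> E)"
  proof (rule card_le_of_diagonal_factorization_mod_prime)
    show "prime (int q)" "\<not> int q dvd d" "finite Y" "finite (E <+> E)"
      using q d \<open>finite Y\<close> by (simp_all add: E_def finite_low_exps)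
    show "[(\<Sum>j\<in>E <+> E. f j y1 * g j y2) = (if y1 = y2 then d else 0)] (mod int q)"
      if "y1 \<in> Y" "y2 \<in> Y" for y1 y2
      using diagonal[OF that] drop_low_c[of y1 y2]
      unfolding expand factor by (meson cong_sym cong_trans)
  qed
  then show ?thesis
    by (simp add: E_def finite_low_exps card_Plus)
qed

section \<open>Corner-free sets\<close>

definition corner_free :: "nat \<Rightarrow> nat \<Rightarrow> ((nat \<Rightarrow> nat) \<times> (nat \<Rightarrow> nat)) set \<Rightarrow> bool" where
  "corner_free q n S \<longleftrightarrow>
    \<not> (\<exists>x y y' d. x \<in> Fqn q n \<and> y \<in> Fqn q n \<and> y' \<in> Fqn q n \<and> d \<in> Fqn q n \<and> d \<noteq> (\<lambda>_. 0)
       \<and> (x, y) \<in> S \<and> (x, vadd q y d) \<in> S \<and> (vadd q x d, y') \<in> S)"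

lemma corner_free_fibre_diagonal:
  fixes v :: "(nat \<Rightarrow> nat) \<Rightarrow> int"
  assumes q: "prime q" and S: "S \<subseteq> Fqn q n \<times> Fqn q n" and "corner_free q n S"
    and xy1: "(x, y1) \<in> S" and xy2: "(x, y2) \<in> S"
  shows "[(\<Sum>c\<in>fst ` S. v c * corner_poly q n x y1 y2 c) = (if y1 = y2 then v x else 0)] (mod int q)"
proof -
  have "0 < q"
    using q prime_gt_0_nat by blast
  have "finite S"
    using S finite_Fqn by (meson finite_SigmaI finite_subset)
  have x: "x \<in> Fqn q n" and y1: "y1 \<in> Fqn q n" and y2: "y2 \<in> Fqn q n"
    using xy1 xy2 S by auto
  obtain d where d: "d \<in> Fqn q n" and y2_eq: "vadd q y1 d = y2"
    using exists_vadd_eq[OF \<open>0 < q\<close> y1 y2] by blast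
  have "(if vadd q x d \<in> fst ` S then v (vadd q x d) else 0) = (if y1 = y2 then v x else 0)"
  proof (cases "y1 = y2")
    case True
    then have "x = vadd q x d"
      using corner_eq_iff[OF \<open>0 < q\<close> x x d y2_eq] by simp
    with True xy1 show ?thesis
      by force
  next
    case False
    with y2_eq vadd_zero[OF \<open>0 < q\<close> y1] have "d \<noteq> (\<lambda>_. 0)"
      by auto
    have "vadd q x d \<notin> fst ` S"
    proof
      assume "vadd q x d \<in> fst ` S"
      then obtain y' where "(vadd q x d, y') \<in> S"
        by force
      moreover from this S have "y' \<in> Fqn q n"
        by auto
      ultimately show False
        using \<open>corner_free q n S\<close> x y1 d \<open>d \<noteq> (\<lambda>_. 0)\<close> xy1 xy2 y2_eq
        unfolding corner_free_def by blast
    qed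
    with False show ?thesis
      by simp
  qed
  moreover have "fst ` S \<subseteq> Fqn q n"
    using S by auto
  ultimately show ?thesis
    using sum_corner_poly_cong[OF q _ _ x d y2_eq, of "fst ` S" v] \<open>finite S\<close> by simp
qed

lemma card_fibre_corner_free_le:
  fixes v :: "(nat \<Rightarrow> nat) \<Rightarrow> int"
  assumes q: "prime q" and S: "S \<subseteq> Fqn q n \<times> Fqn q n" and "corner_free q n S"
    and moments: "\<forall>e\<in>low_exps q n. int q dvd (\<Sum>c\<in>fst ` S. multipow n c e * v c)"
    and "\<not> int q dvd v x"
  shows "card {y. (x, y) \<in> S} \<le> 2 * card (low_exps q n)"
proof (rule card_le_of_corner_poly_diagonal[where A = "fst ` S" and x = x and v = v, OF q _ _ \<open>\<not> int q dvd v x\<close>])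
  show "finite {y. (x, y) \<in> S}"
    using S by (intro finite_subset[OF _ finite_Fqn]) auto
  show "int q dvd (\<Sum>c\<in>fst ` S. multipow n c e * v c)" if "e \<in> low_exps q n" for e
    using moments that by blast
  show "[(\<Sum>c\<in>fst ` S. v c * corner_poly q n x y1 y2 c) = (if y1 = y2 then v x else 0)] (mod int q)"
    if "y1 \<in> {y. (x, y) \<in> S}" and "y2 \<in> {y. (x, y) \<in> S}" for y1 y2
    using corner_free_fibre_diagonal[OF q S \<open>corner_free q n S\<close>] that by simp
qed

lemma card_corner_free_le:
  assumes q: "prime q" and S: "S \<subseteq> Fqn q n \<times> Fqn q n" and "corner_free q n S"
  shows "card S \<le> 3 * card (low_exps q n) * q ^ n"
proof -
  define A where "A = fst ` S"
  define Y where "Y x = {y. (x, y) \<in> S}" for x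
  define M where "M = card (low_exps q n)"
  define Z where "Z = {x\<in>A. \<forall>v. (\<forall>e\<in>low_exps q n. int q dvd (\<Sum>c\<in>A. multipow n c e * v c)) \<longrightarrow> int q dvd v x}"
  have "finite S"
    using S finite_Fqn by (meson finite_SigmaI finite_subset)
  then have "finite A"
    by (simp add: A_def)
  have A_sub: "A \<subseteq> Fqn q n" and Y_sub: "Y x \<subseteq> Fqn q n" for x
    using S by (auto simp: A_def Y_def)
  have "card Z \<le> M"
    unfolding Z_def M_def
    using card_forced_zero_coords_le[of "int q" "low_exps q n" A "\<lambda>e c. multipow n c e"]
      q \<open>finite A\<close> finite_low_exps by simp
  have good: "card (Y x) \<le> 2 * M" if "x \<in> A - Z" for x
  proof -
    from that obtain v where "\<forall>e\<in>low_exps q n. int q dvd (\<Sum>c\<in>A. multipow n c e * v c)"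
      and "\<not> int q dvd v x"
      by (auto simp: Z_def)
    then show ?thesis
      using card_fibre_corner_free_le[OF q S \<open>corner_free q n S\<close>] by (simp add: A_def Y_def M_def)
  qed
  have all: "card (Y x) \<le> q ^ n" for x
    using card_mono[OF finite_Fqn Y_sub] by (simp add: card_Fqn)
  have "S = Sigma A Y"
    by (force simp: A_def Y_def)
  then have "card S = (\<Sum>x\<in>A. card (Y x))"
    using \<open>finite A\<close> finite_subset[OF Y_sub finite_Fqn] by simp
  also have "\<dots> = (\<Sum>x\<in>A - Z. card (Y x)) + (\<Sum>x\<in>Z. card (Y x))"
    using \<open>finite A\<close> by (intro sum.subset_diff) (auto simp: Z_def)
  also have "\<dots> \<le> card (A - Z) * (2 * M) + card Z * q ^ n"
    using sum_bounded_above[of "A - Z" "\<lambda>x. card (Y x)" "2 * M"]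
      sum_bounded_above[of Z "\<lambda>x. card (Y x)" "q ^ n"] good all
    by (intro add_mono) auto
  also have "\<dots> \<le> q ^ n * (2 * M) + M * q ^ n"
  proof -
    have "card (A - Z) \<le> q ^ n"
      using card_mono[OF finite_Fqn, of "A - Z"] A_sub by (auto simp: card_Fqn)
    with \<open>card Z \<le> M\<close> show ?thesis
      by (intro add_mono mult_mono) auto
  qed
  finally show ?thesis
    by (simp add: M_def algebra_simps)
qed

section \<open>Counting low-degree exponents\<close>

lemma one_le_powr_of_le_one:
  fixes t e :: real
  assumes "0 < t" and "t \<le> 1" and "e \<le> 0"
  shows "1 \<le> t powr e"
proof -
  have "t powr (- e) \<le> 1" and "0 < t powr (- e)"
    using assms by (simp_all add: powr_le1)
  then show ?thesis
    using powr_minus[of t "- e"] by (simp add: one_le_inverse)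
qed

lemma card_low_exps_le:
  fixes t :: real
  assumes "0 < q" and "0 < t" and "t < 1"
  shows "real (card (low_exps q n)) \<le> (t powr (- (real q - 1) / 3) * (\<Sum>i<q. t ^ i)) ^ n"
proof -
  define \<beta> where "\<beta> = (real q - 1) / 3 * real n"
  have weight: "1 \<le> t powr (real (mdeg n a) - \<beta>)" if "a \<in> low_exps q n" for a
  proof -
    have "3 * mdeg n a \<le> (q - 1) * n"
      using that by (simp add: low_exps_def)
    then have "real (3 * mdeg n a) \<le> real ((q - 1) * n)"
      by (simp only: of_nat_le_iff)
    then have "real (mdeg n a) \<le> \<beta>"
      using \<open>0 < q\<close> by (simp add: \<beta>_def of_nat_diff)
    then show ?thesis
      using assms by (intro one_le_powr_of_le_one) auto
  qed
  have "real (card (low_exps q n)) \<le> (\<Sum>a\<in>low_exps q n. t powr (real (mdeg n a) - \<beta>))"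
    using weight sum_mono[of "low_exps q n" "\<lambda>_. 1::real"] by fastforce
  also have "\<dots> \<le> (\<Sum>a\<in>Fqn q n. t powr (real (mdeg n a) - \<beta>))"
    by (intro sum_mono2 finite_Fqn) (auto simp: low_exps_def)
  also have "\<dots> = t powr (- \<beta>) * (\<Sum>a\<in>Fqn q n. t ^ mdeg n a)"
    using \<open>0 < t\<close>
    by (simp add: powr_diff powr_minus powr_realpow divide_inverse sum_distrib_left mult.commute)
  also have "\<dots> = t powr (- \<beta>) * (\<Sum>a\<in>Fqn q n. \<Prod>i<n. t ^ a i)"
    by (simp add: mdeg_def power_sum)
  also have "\<dots> = t powr (- \<beta>) * (\<Sum>i<q. t ^ i) ^ n"
    by (subst sum_prod_Fqn) simp
  also have "t powr (- \<beta>) = (t powr (- (real q - 1) / 3)) ^ n"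
  proof -
    have "- \<beta> = - (real q - 1) / 3 * real n"
      by (simp add: \<beta>_def field_simps)
    then have "t powr (- \<beta>) = t powr (- (real q - 1) / 3 * real n)"
      by (rule arg_cong)
    also have "\<dots> = (t powr (- (real q - 1) / 3)) ^ n"
      unfolding powr_powr[symmetric] using \<open>0 < t\<close> by (simp add: powr_realpow)
    finally show ?thesis .
  qed
  finally show ?thesis
    by (simp add: power_mult_distrib)
qed

definition corner_inf :: "nat \<Rightarrow> real" where
  "corner_inf q = (INF t\<in>{0<..<1::real}. t powr (- (real q - 1) / 3) * (\<Sum>i<q. t ^ i))"

lemma card_low_exps_le_corner_inf:
  assumes "0 < q"
  shows "real (card (low_exps q n)) \<le> corner_inf q ^ n"
proof (cases "n = 0")
  case True
  have "card (low_exps q n) \<le> card (Fqn q n)"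
    by (intro card_mono finite_Fqn) (auto simp: low_exps_def)
  with True show ?thesis
    by (simp add: card_Fqn)
next
  case False
  define f where "f t = t powr (- (real q - 1) / 3) * (\<Sum>i<q. t ^ i)" for t :: real
  have "root n (card (low_exps q n)) \<le> f t" if "t \<in> {0<..<1}" for t
  proof -
    have "0 \<le> f t"
      using that by (simp add: f_def sum_nonneg)
    moreover have "real (card (low_exps q n)) \<le> f t ^ n"
      using card_low_exps_le[OF assms] that by (simp add: f_def)
    ultimately show ?thesis
      using False by (metis real_root_le_iff real_root_power_cancel not_gr_zero)
  qed
  then have "root n (card (low_exps q n)) \<le> corner_inf q"
    unfolding corner_inf_def f_def[symmetric] by (intro cINF_greatest) auto
  then have "root n (card (low_exps q n)) ^ n \<le> corner_inf q ^ n"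
    by (intro power_mono) (simp_all add: real_root_ge_zero)
  with False show ?thesis
    by simp
qed

lemma one_le_corner_inf:
  assumes "0 < q"
  shows "1 \<le> corner_inf q"
  unfolding corner_inf_def
proof (intro cINF_greatest)
  fix t :: real
  assume "t \<in> {0<..<1}"
  then have "1 \<le> t powr (- (real q - 1) / 3)"
    using assms by (intro one_le_powr_of_le_one) auto
  moreover have "1 \<le> (\<Sum>i<q. t ^ i)"
  proof -
    have "(\<Sum>i\<in>{0}. t ^ i) \<le> (\<Sum>i<q. t ^ i)"
      using assms \<open>t \<in> {0<..<1}\<close> by (intro sum_mono2) auto
    then show ?thesis
      by simp
  qed
  ultimately show "1 \<le> t powr (- (real q - 1) / 3) * (\<Sum>i<q. t ^ i)"
    using mult_mono[of 1 _ 1] by fastforce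
qed simp

lemma powr_two_minus_c_const:
  assumes "1 < q"
  shows "real q powr ((2 - c_const q) * real n) = (real q * corner_inf q) ^ n"
proof -
  have "c_const q = 1 - log (real q) (corner_inf q)"
    by (simp add: c_const_def corner_inf_def)
  moreover have "0 < corner_inf q"
    using one_le_corner_inf[of q] assms by simp
  ultimately have "real q powr (2 - c_const q) = real q * corner_inf q"
    using assms by (simp add: powr_add)
  then have "real q powr ((2 - c_const q) * real n) = (real q * corner_inf q) powr real n"
    by (simp add: powr_powr[symmetric])
  also have "\<dots> = (real q * corner_inf q) ^ n"
    using assms \<open>0 < corner_inf q\<close> by (simp add: powr_realpow)
  finally show ?thesis .
qed

theorem theorem1p2:
  fixes q n :: nat and S :: "((nat \<Rightarrow> nat) \<times> (nat \<Rightarrow> nat)) set"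
  assumes "prime q" and "q \<ge> 2" and "n \<ge> 1"
    and "S \<subseteq> Fqn q n \<times> Fqn q n"
    and "\<not> (\<exists>x y y' d. x \<in> Fqn q n \<and> y \<in> Fqn q n \<and> y' \<in> Fqn q n \<and> d \<in> Fqn q n
            \<and> d \<noteq> (\<lambda>_. 0)
            \<and> (x, y) \<in> S \<and> (x, vadd q y d) \<in> S \<and> (vadd q x d, y') \<in> S)"
  shows "real (card S) \<le> 3 * real q powr ((2 - c_const q) * real n)"
proof -
  have "corner_free q n S"
    using assms(5) unfolding corner_free_def .
  with assms(1,4) have "real (card S) \<le> 3 * real (card (low_exps q n)) * real q ^ n"
    using card_corner_free_le by (metis of_nat_le_iff of_nat_mult of_nat_numeral of_nat_power)
  also have "\<dots> \<le> 3 * corner_inf q ^ n * real q ^ n"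
    using card_low_exps_le_corner_inf assms(2) by (intro mult_right_mono mult_left_mono) auto
  also have "\<dots> = 3 * real q powr ((2 - c_const q) * real n)"
    using powr_two_minus_c_const assms(2) by (simp add: power_mult_distrib)
  finally show ?thesis .
qed

end
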